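(* Let $X=\{1,\dots,n\}$, $Y$ a finite set, $Q$ a symmetric irreducible stochastic matrix on $Y$ with eigenspace decomposition $L(Y)=\bigoplus_{j=0}^mW_j$ (notation in context). Let $2\le k\le n$ and let $\underline a=(a_0,a_1,\dots,a_m)$ be a type with $a_0+\cdots+a_m=k$, and $\underline a'=(a_0-1,a_1,\dots,a_m)$. Then $D_k$ maps $P_{k,\underline a}$ into $P_{k-1,\underline a'}$ (in particular $D_kF=0$ for $F\in P_{k,\underline a}$ when $a_0=0$), and, when $a_0\ge1$, $D_k^*$ maps $P_{k-1,\underline a'}$ into $P_{k,\underline a}$.
   Context: $Q=(q(y,y'))$ acts on $L(Y)=\{f:Y\to\mathbb C\}$ by $(Qf)(y)=\sum_{y'}q(y,y')f(y')$; let $\lambda_0=1,\lambda_1,\dots,\lambda_m$ be its distinct eigenvalues with eigenspaces $W_0,\dots,W_m$, where $W_0$ is the space of constant functions; every $f\in W_j$, $j\ge1$, satisfies $\sum_yf(y)=0$. For $0\le k\le n$, $\Theta_k$ is the set of functions $\theta$ whose domain $\mathrm{dom}(\theta)$ is a $k$-element subset of $X$ and which take values in $Y$ ($\Theta_0$ = the empty function). For $\varphi\in\Theta_{k-1},\theta\in\Theta_k$ write $\varphi\subseteq\theta$ if $\mathrm{dom}\varphi\subseteq\mathrm{dom}\theta$ and $\theta|_{\mathrm{dom}\varphi}=\varphi$. $L(\Theta_k)=\bigoplus_{|A|=k}L(Y^A)$, with inner product $\langle F,G\rangle=\sum_{\theta}F(\theta)\overline{G(\theta)}$. For $2\le k\le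 n$, $D_k:L(\Theta_k)\to L(\Theta_{k-1})$, $(D_kF)(\varphi)=\sum_{\theta\in\Theta_k:\varphi\subseteq\theta}F(\theta)$; for $1\le k\le n$, $D_k^*:L(\Theta_{k-1})\to L(\Theta_k)$, $(D_k^*F)(\theta)=\sum_{\varphi\in\Theta_{k-1}:\varphi\subseteq\theta}F(\varphi)$. A type is a tuple $\underline a=(a_0,\dots,a_m)$ of nonnegative integers; $\ell(\underline a)=a_1+\cdots+a_m$. For $|A|=k=a_0+\cdots+a_m$, a fundamental function of type $\underline a$ in $L(Y^A)$ is $F=\bigotimes_{j\in A}F^j$, $F(\theta)=\prod_{j\in A}F^j(\theta(j))$ for $\theta\in Y^A$ (and $0$ on other domains), where each $F^j$ lies in some $W_{i_j}$ and $\#\{j\in A:i_j=i\}=a_i$ for each $i$. $P_{k,\underline a,A}$ is the span of fundamental functions of type $\underline a$ in $L(Y^A)$, and $P_{k,\underline a}=\bigoplus_{|A|=k}P_{k,\underline a,A}$; if a type has a negative entry the corresponding space is $\{0\}$. *)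

theory Defs
  imports Complex_Main
begin

definition Qop :: "('y::finite \<Rightarrow> 'y \<Rightarrow> real) \<Rightarrow> ('y \<Rightarrow> complex) \<Rightarrow> 'y \<Rightarrow> complex" where
  "Qop q f y = (\<Sum>y'\<in>UNIV. complex_of_real (q y y') * f y')"

definition symmetric_irreducible_stochastic :: "('y::finite \<Rightarrow> 'y \<Rightarrow> real) \<Rightarrow> bool" where
  "symmetric_irreducible_stochastic q \<longleftrightarrow>
     (\<forall>y y'. q y y' = q y' y) \<and>
     (\<forall>y y'. 0 \<le> q y y') \<and>
     (\<forall>y. (\<Sum>y'\<in>UNIV. q y y') = 1) \<and>
     (\<forall>y y'. (y, y') \<in> {(a, b). 0 < q a b}\<^sup>*)"

definition W :: "('y::finite \<Rightarrow> 'y \<Rightarrow> real) \<Rightarrow> (nat \<Rightarrow> real) \<Rightarrow> nat \<Rightarrow> ('y \<Rightarrow> complex) set" where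
  "W q lam j = {f. Qop q f = (\<lambda>y. complex_of_real (lam j) * f y)}"

definition eigen_enumeration :: "('y::finite \<Rightarrow> 'y \<Rightarrow> real) \<Rightarrow> nat \<Rightarrow> (nat \<Rightarrow> real) \<Rightarrow> bool" where
  "eigen_enumeration q m lam \<longleftrightarrow>
     lam 0 = 1 \<and> inj_on lam {0..m} \<and>
     (\<forall>j\<le>m. \<exists>f. (\<exists>y. f y \<noteq> 0) \<and> f \<in> W q lam j) \<and>
     (\<forall>(\<mu>::complex) f. (\<exists>y. f y \<noteq> 0) \<and> Qop q f = (\<lambda>y. \<mu> * f y) \<longrightarrow> (\<exists>j\<le>m. \<mu> = complex_of_real (lam j)))"

definition Theta :: "nat \<Rightarrow> nat \<Rightarrow> (nat \<rightharpoonup> 'y) set" where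
  "Theta n k = {\<theta>. dom \<theta> \<subseteq> {1..n} \<and> card (dom \<theta>) = k}"

text \<open>Elements of L(Theta_k) are functions on partial maps vanishing outside Theta_k.\<close>
definition D :: "nat \<Rightarrow> nat \<Rightarrow> ((nat \<rightharpoonup> 'y) \<Rightarrow> complex) \<Rightarrow> (nat \<rightharpoonup> 'y) \<Rightarrow> complex" where
  "D n k F \<phi> = (if \<phi> \<in> Theta n (k - 1)
                 then (\<Sum>\<theta>\<in>{\<theta>\<in>Theta n k. \<phi> \<subseteq>\<^sub>m \<theta>}. F \<theta>) else 0)"

definition Dstar :: "nat \<Rightarrow> nat \<Rightarrow> ((nat \<rightharpoonup> 'y) \<Rightarrow> complex) \<Rightarrow> (nat \<rightharpoonup> 'y) \<Rightarrow> complex" where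
  "Dstar n k F \<theta> = (if \<theta> \<in> Theta n k
                 then (\<Sum>\<phi>\<in>{\<phi>\<in>Theta n (k - 1). \<phi> \<subseteq>\<^sub>m \<theta>}. F \<phi>) else 0)"

text \<open>Fundamental functions of type a (a t = a_t for t = 0..m; integer-valued so that
  types with negative entries are allowed, and then there are none of them) with
  k-element domain.\<close>
definition fundamental :: "('y::finite \<Rightarrow> 'y \<Rightarrow> real) \<Rightarrow> nat \<Rightarrow> (nat \<Rightarrow> real) \<Rightarrow> nat \<Rightarrow> nat
    \<Rightarrow> (nat \<Rightarrow> int) \<Rightarrow> ((nat \<rightharpoonup> 'y) \<Rightarrow> complex) set" where
  "fundamental q m lam n k a =
     {F. \<exists>A (i :: nat \<Rightarrow> nat) (G :: nat \<Rightarrow> 'y \<Rightarrow> complex).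
          A \<subseteq> {1..n} \<and> card A = k \<and>
          (\<forall>j\<in>A. i j \<le> m \<and> G j \<in> W q lam (i j)) \<and>
          (\<forall>t\<le>m. int (card {j\<in>A. i j = t}) = a t) \<and>
          F = (\<lambda>\<theta>. if dom \<theta> = A then (\<Prod>j\<in>A. G j (the (\<theta> j))) else 0)}"

definition cspan :: "('b \<Rightarrow> complex) set \<Rightarrow> ('b \<Rightarrow> complex) set" where
  "cspan S = {(\<lambda>x. \<Sum>G\<in>T. c G * G x) | T c. finite T \<and> T \<subseteq> S}"

definition P :: "('y::finite \<Rightarrow> 'y \<Rightarrow> real) \<Rightarrow> nat \<Rightarrow> (nat \<Rightarrow> real) \<Rightarrow> nat \<Rightarrow> nat
    \<Rightarrow> (nat \<Rightarrow> int) \<Rightarrow> ((nat \<rightharpoonup> 'y) \<Rightarrow> complex) set" where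
  "P q m lam n k a = cspan (fundamental q m lam n k a)"

end

theory Submission
  imports Defs "HOL-Library.Function_Algebras"
begin

text \<open>A fundamental function is a tensor product of eigenfunctions \<open>G j\<close>, \<open>j \<in> A\<close>.
  Applying \<open>D\<close> sums out one coordinate \<open>x\<close>, which multiplies the tensor product on
  \<open>A - {x}\<close> by \<open>\<Sum>y. G x y\<close>; this vanishes unless \<open>G x \<in> W 0\<close>, since eigenfunctions for
  eigenvalues other than 1 have mean zero (Q is doubly stochastic). So only removing a
  \<open>W 0\<close>-factor survives, lowering \<open>a 0\<close> by one. Dually, \<open>Dstar\<close> of a tensor product on
  \<open>B\<close> is the sum over \<open>x \<notin> B\<close> of the tensor product with the constant function
  \<open>1 \<in> W 0\<close> inserted at \<open>x\<close>. Both operators are linear, so the claims pass to spans.\<close>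

interpretation fun_cmodule: module "\<lambda>(c::complex) (f::'b \<Rightarrow> complex) x. c * f x"
  by unfold_locales (auto simp: fun_eq_iff algebra_simps)

lemma sum_fun_apply: "(\<Sum>x\<in>A. f x) y = (\<Sum>x\<in>A. f x y)"
  by (induction A rule: infinite_finite_induct) auto

lemma cspan_eq_span: "cspan S = fun_cmodule.span S"
  unfolding cspan_def fun_cmodule.span_explicit by (simp add: sum_fun_apply fun_eq_iff)

lemma fun_cmodule_span_sum:
  "(\<And>x. x \<in> A \<Longrightarrow> f x \<in> fun_cmodule.span S) \<Longrightarrow> (\<lambda>y. \<Sum>x\<in>A. f x y) \<in> fun_cmodule.span S"
  using fun_cmodule.span_sum[of A f S] by (simp add: sum_fun_apply[abs_def])

lemma span_image_subset:
  assumes "module_hom (\<lambda>(c::complex) (f::'b \<Rightarrow> complex) x. c * f x)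
             (\<lambda>(c::complex) (f::'c \<Rightarrow> complex) x. c * f x) L"
    and "L ` S \<subseteq> fun_cmodule.span S'"
  shows "L ` fun_cmodule.span S \<subseteq> fun_cmodule.span S'"
  by (metis assms fun_cmodule.span_minimal fun_cmodule.subspace_span module_hom.span_image)

lemma finite_Theta: "finite (Theta n k :: (nat \<rightharpoonup> 'y::finite) set)"
proof (rule finite_subset)
  show "Theta n k \<subseteq> (\<Union>A\<in>Pow {1..n}. {\<theta> :: nat \<rightharpoonup> 'y. dom \<theta> = A \<and> ran \<theta> \<subseteq> UNIV})"
    unfolding Theta_def by auto
  show "finite (\<Union>A\<in>Pow {1..n}. {\<theta> :: nat \<rightharpoonup> 'y. dom \<theta> = A \<and> ran \<theta> \<subseteq> UNIV})"
    by (intro finite_UN_I finite_set_of_finite_maps) (auto intro: finite_subset)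
qed

lemma module_hom_D:
  "module_hom (\<lambda>c f x. c * f x) (\<lambda>c f x. c * f x) (D n k :: ((nat \<rightharpoonup> 'y::finite) \<Rightarrow> complex) \<Rightarrow> _)"
  by (simp add: module_hom_iff fun_cmodule.module_axioms D_def fun_eq_iff
      sum.distrib sum_distrib_left)

lemma module_hom_Dstar:
  "module_hom (\<lambda>c f x. c * f x) (\<lambda>c f x. c * f x) (Dstar n k :: ((nat \<rightharpoonup> 'y::finite) \<Rightarrow> complex) \<Rightarrow> _)"
  by (simp add: module_hom_iff fun_cmodule.module_axioms Dstar_def fun_eq_iff
      sum.distrib sum_distrib_left)

definition tensor :: "nat set \<Rightarrow> (nat \<Rightarrow> 'y \<Rightarrow> complex) \<Rightarrow> (nat \<rightharpoonup> 'y) \<Rightarrow> complex" where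
  "tensor A G \<theta> = (if dom \<theta> = A then \<Prod>j\<in>A. G j (the (\<theta> j)) else 0)"

lemma tensor_cong: "(\<And>j. j \<in> A \<Longrightarrow> G j = G' j) \<Longrightarrow> tensor A G = tensor A G'"
  by (auto simp: tensor_def fun_eq_iff intro!: prod.cong)

lemma tensor_upd:
  assumes "finite A" "x \<in> A" "dom \<phi> = A - {x}"
  shows "tensor A G (\<phi>(x \<mapsto> y)) = G x y * tensor (A - {x}) G \<phi>"
proof -
  have "(\<Prod>j\<in>A - {x}. G j (the ((\<phi>(x \<mapsto> y)) j))) = (\<Prod>j\<in>A - {x}. G j (the (\<phi> j)))"
    by (intro prod.cong) auto
  then show ?thesis using assms by (auto simp: tensor_def prod.remove)
qed

lemma card_eq_Suc_superset:
  assumes "finite A" "B \<subseteq> A" "card A = Suc (card B)"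
  obtains x where "x \<in> A - B" "A = insert x B"
proof -
  have "card (A - B) = 1" using assms by (simp add: card_Diff_subset finite_subset)
  then obtain x where "A - B = {x}" by (rule card_1_singletonE)
  then show ?thesis using assms(2) that by blast
qed

lemma map_le_eq_restrict: "\<phi> \<subseteq>\<^sub>m \<theta> \<Longrightarrow> \<phi> = \<theta> |` dom \<phi>"
  by (auto simp: map_le_def restrict_map_def fun_eq_iff)

lemma map_le_extensions:
  assumes "x \<in> A" "dom \<phi> = A - {x}"
  shows "{\<theta>. \<phi> \<subseteq>\<^sub>m \<theta> \<and> dom \<theta> = A} = range (\<lambda>y. \<phi>(x \<mapsto> y))"
proof (intro equalityI subsetI)
  fix \<theta> assume "\<theta> \<in> {\<theta>. \<phi> \<subseteq>\<^sub>m \<theta> \<and> dom \<theta> = A}"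
  then have le: "\<phi> \<subseteq>\<^sub>m \<theta>" and dom: "dom \<theta> = A" by auto
  then obtain y where "\<theta> x = Some y" using assms(1) by auto
  moreover have "\<theta> j = \<phi> j" if "j \<noteq> x" for j
    using le dom assms(2) that by (cases "j \<in> A") (auto simp: map_le_def)
  ultimately have "\<theta> = \<phi>(x \<mapsto> y)" by auto
  then show "\<theta> \<in> range (\<lambda>y. \<phi>(x \<mapsto> y))" by blast
next
  fix \<theta> assume "\<theta> \<in> range (\<lambda>y. \<phi>(x \<mapsto> y))"
  then obtain y where "\<theta> = \<phi>(x \<mapsto> y)" by blast
  moreover have "insert x (A - {x}) = A" using assms(1) by blast
  ultimately show "\<theta> \<in> {\<theta>. \<phi> \<subseteq>\<^sub>m \<theta> \<and> dom \<theta> = A}"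
    using assms(2) by (auto simp: map_le_def)
qed

lemma D_tensor:
  fixes G :: "nat \<Rightarrow> 'y::finite \<Rightarrow> complex"
  assumes A: "A \<subseteq> {1..n}" "card A = k" and k: "1 \<le> k"
  shows "D n k (tensor A G) = (\<lambda>\<phi>. \<Sum>x\<in>A. (\<Sum>y\<in>UNIV. G x y) * tensor (A - {x}) G \<phi>)"
proof
  fix \<phi> :: "nat \<rightharpoonup> 'y"
  have finA: "finite A" using A(1) by (rule finite_subset) simp
  show "D n k (tensor A G) \<phi> = (\<Sum>x\<in>A. (\<Sum>y\<in>UNIV. G x y) * tensor (A - {x}) G \<phi>)"
  proof (cases "\<exists>x\<in>A. dom \<phi> = A - {x}")
    case True
    then obtain x where x: "x \<in> A" and dom: "dom \<phi> = A - {x}" by blast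
    have \<phi>: "\<phi> \<in> Theta n (k - 1)" using A finA x dom by (auto simp: Theta_def)
    have "D n k (tensor A G) \<phi> = (\<Sum>\<theta>\<in>{\<theta>\<in>Theta n k. \<phi> \<subseteq>\<^sub>m \<theta>}. tensor A G \<theta>)"
      using \<phi> by (simp add: D_def)
    also have "\<dots> = (\<Sum>\<theta>\<in>{\<theta>. \<phi> \<subseteq>\<^sub>m \<theta> \<and> dom \<theta> = A}. tensor A G \<theta>)"
      using A by (intro sum.mono_neutral_cong_right finite_subset[OF _ finite_Theta])
         (auto simp: Theta_def tensor_def)
    also have "\<dots> = (\<Sum>y\<in>UNIV. tensor A G (\<phi>(x \<mapsto> y)))"
      unfolding map_le_extensions[OF x dom] by (simp add: sum.reindex inj_on_def fun_eq_iff)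
    also have "\<dots> = (\<Sum>x'\<in>{x}. (\<Sum>y\<in>UNIV. G x' y) * tensor (A - {x'}) G \<phi>)"
      using tensor_upd[OF finA x dom] by (simp add: sum_distrib_right)
    also have "\<dots> = (\<Sum>x'\<in>A. (\<Sum>y\<in>UNIV. G x' y) * tensor (A - {x'}) G \<phi>)"
      using finA x dom by (intro sum.mono_neutral_left) (auto simp: tensor_def)
    finally show ?thesis .
  next
    case False
    have "tensor A G \<theta> = 0" if "\<phi> \<in> Theta n (k - 1)" "\<phi> \<subseteq>\<^sub>m \<theta>" for \<theta>
    proof (rule ccontr)
      assume "tensor A G \<theta> \<noteq> 0"
      then have "dom \<phi> \<subseteq> A" using that(2) by (auto simp: tensor_def dest: map_le_implies_dom_le split: if_splits)
      moreover have "card A = Suc (card (dom \<phi>))" using that(1) A k by (simp add: Theta_def)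
      ultimately obtain x where "x \<in> A - dom \<phi>" "A = insert x (dom \<phi>)"
        by (rule card_eq_Suc_superset[OF finA])
      then show False using False by auto
    qed
    moreover have "tensor (A - {x}) G \<phi> = 0" if "x \<in> A" for x
      using False that by (auto simp: tensor_def)
    ultimately show ?thesis by (simp add: D_def)
  qed
qed

lemma Dstar_tensor:
  fixes G :: "nat \<Rightarrow> 'y::finite \<Rightarrow> complex"
  assumes B: "B \<subseteq> {1..n}" "card B = k - 1" and k: "1 \<le> k"
  shows "Dstar n k (tensor B G) = (\<lambda>\<theta>. \<Sum>x\<in>{1..n} - B. tensor (insert x B) (G(x := \<lambda>_. 1)) \<theta>)"
proof
  fix \<theta> :: "nat \<rightharpoonup> 'y"
  have finB: "finite B" using B(1) by (rule finite_subset) simp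
  show "Dstar n k (tensor B G) \<theta> = (\<Sum>x\<in>{1..n} - B. tensor (insert x B) (G(x := \<lambda>_. 1)) \<theta>)"
  proof (cases "\<exists>x\<in>{1..n} - B. dom \<theta> = insert x B")
    case True
    then obtain x where x: "x \<in> {1..n} - B" and dom: "dom \<theta> = insert x B" by blast
    have \<theta>: "\<theta> \<in> Theta n k" using B finB x dom k by (auto simp: Theta_def)
    have restr: "\<theta> |` B \<in> {\<phi>\<in>Theta n (k - 1). \<phi> \<subseteq>\<^sub>m \<theta>}"
      using B dom by (simp add: Theta_def map_le_def Int_absorb1[of B "insert x B"] subset_insertI)
    have "Dstar n k (tensor B G) \<theta> = (\<Sum>\<phi>\<in>{\<phi>\<in>Theta n (k - 1). \<phi> \<subseteq>\<^sub>m \<theta>}. tensor B G \<phi>)"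
      using \<theta> by (simp add: Dstar_def)
    also have "\<dots> = (\<Sum>\<phi>\<in>{\<theta> |` B}. tensor B G \<phi>)"
      using restr by (intro sum.mono_neutral_right finite_subset[OF _ finite_Theta])
        (auto simp: tensor_def dest: map_le_eq_restrict)
    also have "\<dots> = tensor B (G(x := \<lambda>_. 1)) (\<theta> |` B)"
      using x by (subst tensor_cong[of B "G(x := \<lambda>_. 1)" G]) auto
    also have "\<dots> = tensor (insert x B) (G(x := \<lambda>_. 1)) ((\<theta> |` B)(x \<mapsto> the (\<theta> x)))"
      using x finB dom tensor_upd[of "insert x B" x "\<theta> |` B" "G(x := \<lambda>_. 1)"] by auto
    also have "(\<theta> |` B)(x \<mapsto> the (\<theta> x)) = \<theta>"
    proof -
      obtain y where "\<theta> x = Some y" using dom by auto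
      then show ?thesis using dom by (auto simp: restrict_map_def fun_eq_iff)
    qed
    also have "tensor (insert x B) (G(x := \<lambda>_. 1)) \<theta>
        = (\<Sum>x'\<in>{1..n} - B. tensor (insert x' B) (G(x' := \<lambda>_. 1)) \<theta>)"
      using x dom by (intro sum.mono_neutral_left[of _ "{x}", simplified]) (auto simp: tensor_def)
    finally show ?thesis .
  next
    case False
    have "tensor B G \<phi> = 0" if "\<theta> \<in> Theta n k" "\<phi> \<subseteq>\<^sub>m \<theta>" for \<phi>
    proof (rule ccontr)
      assume "tensor B G \<phi> \<noteq> 0"
      then have "B \<subseteq> dom \<theta>" using that(2) by (auto simp: tensor_def dest: map_le_implies_dom_le split: if_splits)
      moreover have "card (dom \<theta>) = Suc (card B)" "finite (dom \<theta>)" "dom \<theta> \<subseteq> {1..n}"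
        using that(1) B k by (auto simp: Theta_def intro: finite_subset)
      ultimately obtain x where "x \<in> dom \<theta> - B" "dom \<theta> = insert x B"
        by (metis card_eq_Suc_superset)
      then show False using False \<open>dom \<theta> \<subseteq> {1..n}\<close> by auto
    qed
    moreover have "tensor (insert x B) (G(x := \<lambda>_. 1)) \<theta> = 0" if "x \<in> {1..n} - B" for x
      using False that by (auto simp: tensor_def)
    ultimately show ?thesis by (simp add: Dstar_def)
  qed
qed

lemma column_sum_eq_1:
  assumes "symmetric_irreducible_stochastic q"
  shows "(\<Sum>y\<in>UNIV. q y y') = 1"
proof -
  have "(\<Sum>y\<in>UNIV. q y y') = (\<Sum>y\<in>UNIV. q y' y)"
    using assms unfolding symmetric_irreducible_stochastic_def by (intro sum.cong) auto
  also have "\<dots> = 1" using assms unfolding symmetric_irreducible_stochastic_def by blast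
  finally show ?thesis .
qed

lemma sum_Qop:
  assumes "\<And>y'. (\<Sum>y\<in>UNIV. q y y') = 1"
  shows "(\<Sum>y\<in>UNIV. Qop q f y) = (\<Sum>y\<in>UNIV. f y)"
proof -
  have "(\<Sum>y\<in>UNIV. Qop q f y) = (\<Sum>y'\<in>UNIV. (\<Sum>y\<in>UNIV. complex_of_real (q y y')) * f y')"
    unfolding Qop_def by (simp add: sum_distrib_right, rule sum.swap)
  then show ?thesis by (simp add: assms flip: of_real_sum)
qed

lemma sum_eigenfunction_eq_0:
  assumes "\<And>y'. (\<Sum>y\<in>UNIV. q y y') = 1" and "f \<in> W q lam j" and "lam j \<noteq> 1"
  shows "(\<Sum>y\<in>UNIV. f y) = 0"
proof -
  have "complex_of_real (lam j) * (\<Sum>y\<in>UNIV. f y) = (\<Sum>y\<in>UNIV. f y)"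
    using sum_Qop[of q f, OF assms(1)] assms(2) by (simp add: W_def sum_distrib_left)
  then have "(complex_of_real (lam j) - 1) * (\<Sum>y\<in>UNIV. f y) = 0"
    by (simp add: algebra_simps)
  with assms(3) show ?thesis by (metis eq_iff_diff_eq_0 mult_eq_0_iff of_real_1 of_real_eq_iff)
qed

lemma eigenvalue_ne_1:
  "eigen_enumeration q m lam \<Longrightarrow> 0 < j \<Longrightarrow> j \<le> m \<Longrightarrow> lam j \<noteq> 1"
  unfolding eigen_enumeration_def by (metis atLeastAtMost_iff inj_on_eq_iff le0 not_less_zero)

lemma const_1_in_W0:
  assumes "symmetric_irreducible_stochastic q" and "eigen_enumeration q m lam"
  shows "(\<lambda>_. 1) \<in> W q lam 0"
proof -
  have "(\<Sum>y'\<in>UNIV. q y y') = 1" for y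
    using assms(1) unfolding symmetric_irreducible_stochastic_def by blast
  moreover have "lam 0 = 1" using assms(2) unfolding eigen_enumeration_def by blast
  ultimately show ?thesis by (simp add: W_def Qop_def fun_eq_iff flip: of_real_sum)
qed

lemma mem_fundamental_iff:
  "F \<in> fundamental q m lam n k a \<longleftrightarrow>
    (\<exists>A i G. A \<subseteq> {1..n} \<and> card A = k \<and> (\<forall>j\<in>A. i j \<le> m \<and> G j \<in> W q lam (i j)) \<and>
       (\<forall>t\<le>m. int (card {j\<in>A. i j = t}) = a t) \<and> F = tensor A G)"
  by (simp add: fundamental_def tensor_def[abs_def])

lemma fundamental_eq_empty: "t \<le> m \<Longrightarrow> a t < 0 \<Longrightarrow> fundamental q m lam n k a = {}"
  by (force simp: fundamental_def)

lemma card_level_insert: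
  assumes "finite A" "x \<notin> A"
  shows "card {j\<in>insert x A. i j = t} = card {j\<in>A. i j = t} + (if i x = t then 1 else 0)"
proof -
  have "{j\<in>insert x A. i j = t} = (if i x = t then insert x {j\<in>A. i j = t} else {j\<in>A. i j = t})"
    by auto
  then show ?thesis using assms by simp
qed

lemma tensor_remove_level0_in_fundamental:
  assumes A: "A \<subseteq> {1..n}" "card A = k" and G: "\<forall>j\<in>A. i j \<le> m \<and> G j \<in> W q lam (i j)"
    and type: "\<forall>t\<le>m. int (card {j\<in>A. i j = t}) = a t" and x: "x \<in> A" "i x = 0"
  shows "tensor (A - {x}) G \<in> fundamental q m lam n (k - 1) (a(0 := a 0 - 1))"
proof -
  have finA: "finite A" using A(1) by (rule finite_subset) simp
  have "card {j\<in>A. i j = t} = card {j\<in>A - {x}. i j = t} + (if t = 0 then 1 else 0)" for t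
    using card_level_insert[of "A - {x}" x i t] finA x by (simp add: insert_absorb)
  then have "int (card {j\<in>A - {x}. i j = t}) = (a(0 := a 0 - 1)) t" if "t \<le> m" for t
    using type[rule_format, OF that] by (cases "t = 0") auto
  then show ?thesis unfolding mem_fundamental_iff using A G finA x by (intro exI[of _ "A - {x}"] exI[of _ i] exI[of _ G]) auto
qed

lemma tensor_insert_level0_in_fundamental:
  assumes B: "B \<subseteq> {1..n}" "card B = k - 1" "1 \<le> k"
    and G: "\<forall>j\<in>B. i j \<le> m \<and> G j \<in> W q lam (i j)"
    and type: "\<forall>t\<le>m. int (card {j\<in>B. i j = t}) = (a(0 := a 0 - 1)) t"
    and x: "x \<in> {1..n} - B" and one: "(\<lambda>_. 1) \<in> W q lam 0"
  shows "tensor (insert x B) (G(x := \<lambda>_. 1)) \<in> fundamental q m lam n k a"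
proof -
  have finB: "finite B" using B(1) by (rule finite_subset) simp
  have "{j\<in>B. (i(x := 0)) j = t} = {j\<in>B. i j = t}" for t using x by auto
  then have "int (card {j\<in>insert x B. (i(x := 0)) j = t}) = a t" if "t \<le> m" for t
    using card_level_insert[of B x "i(x := 0)" t] finB x type that by (cases "t = 0") auto
  then show ?thesis unfolding mem_fundamental_iff using B G finB x one
    by (intro exI[of _ "insert x B"] exI[of _ "i(x := 0)"] exI[of _ "G(x := \<lambda>_. 1)"]) auto
qed

lemma D_fundamental:
  assumes q: "symmetric_irreducible_stochastic q" and eig: "eigen_enumeration q m lam"
    and k: "1 \<le> k" and F: "F \<in> fundamental q m lam n k a"
  shows "D n k F \<in> P q m lam n (k - 1) (a(0 := a 0 - 1))"
proof -
  obtain A i G where A: "A \<subseteq> {1..n}" "card A = k"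
    and G: "\<forall>j\<in>A. i j \<le> m \<and> G j \<in> W q lam (i j)"
    and type: "\<forall>t\<le>m. int (card {j\<in>A. i j = t}) = a t" and F_eq: "F = tensor A G"
    using F unfolding mem_fundamental_iff by blast
  have finA: "finite A" using A(1) by (rule finite_subset) simp
  have "(\<Sum>y\<in>UNIV. G x y) = 0" if "x \<in> A" "i x \<noteq> 0" for x
    using that G eigenvalue_ne_1[OF eig] column_sum_eq_1[OF q]
    by (intro sum_eigenfunction_eq_0[of q]) auto
  then have "D n k F = (\<lambda>\<phi>. \<Sum>x\<in>{x\<in>A. i x = 0}. (\<Sum>y\<in>UNIV. G x y) * tensor (A - {x}) G \<phi>)"
    unfolding F_eq D_tensor[OF A k] using finA
    by (intro ext sum.mono_neutral_right) auto
  also have "\<dots> \<in> P q m lam n (k - 1) (a(0 := a 0 - 1))"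
    unfolding P_def cspan_eq_span
    using tensor_remove_level0_in_fundamental[OF A G type]
    by (intro fun_cmodule_span_sum fun_cmodule.span_scale fun_cmodule.span_base) auto
  finally show ?thesis .
qed

lemma Dstar_fundamental:
  assumes q: "symmetric_irreducible_stochastic q" and eig: "eigen_enumeration q m lam"
    and k: "1 \<le> k" and F: "F \<in> fundamental q m lam n (k - 1) (a(0 := a 0 - 1))"
  shows "Dstar n k F \<in> P q m lam n k a"
proof -
  obtain B i G where B: "B \<subseteq> {1..n}" "card B = k - 1"
    and G: "\<forall>j\<in>B. i j \<le> m \<and> G j \<in> W q lam (i j)"
    and type: "\<forall>t\<le>m. int (card {j\<in>B. i j = t}) = (a(0 := a 0 - 1)) t" and F_eq: "F = tensor B G"
    using F unfolding mem_fundamental_iff by blast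
  show ?thesis
    unfolding F_eq Dstar_tensor[OF B k] P_def cspan_eq_span
    using tensor_insert_level0_in_fundamental[OF B k G type _ const_1_in_W0[OF q eig]]
    by (intro fun_cmodule_span_sum fun_cmodule.span_base)
qed

theorem lemma7p3:
  fixes q :: "'y::finite \<Rightarrow> 'y \<Rightarrow> real" and m n k :: nat and lam :: "nat \<Rightarrow> real"
    and a :: "nat \<Rightarrow> int"
  assumes "symmetric_irreducible_stochastic q"
    and "eigen_enumeration q m lam"
    and "2 \<le> k" and "k \<le> n"
    and "\<forall>t\<le>m. 0 \<le> a t"
    and "(\<Sum>t\<le>m. a t) = int k"
  shows "(\<forall>F\<in>P q m lam n k a. D n k F \<in> P q m lam n (k - 1) (a(0 := a 0 - 1))) \<and>
         (a 0 = 0 \<longrightarrow> (\<forall>F\<in>P q m lam n k a. D n k F = (\<lambda>_. 0))) \<and>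
         (1 \<le> a 0 \<longrightarrow> (\<forall>F\<in>P q m lam n (k - 1) (a(0 := a 0 - 1)). Dstar n k F \<in> P q m lam n k a))"
proof -
  have k: "1 \<le> k" using assms(3) by simp
  have D_maps: "D n k ` P q m lam n k a \<subseteq> P q m lam n (k - 1) (a(0 := a 0 - 1))"
    unfolding P_def cspan_eq_span using D_fundamental[OF assms(1,2) k]
    by (intro span_image_subset[OF module_hom_D]) (auto simp: P_def cspan_eq_span)
  moreover have "P q m lam n (k - 1) (a(0 := a 0 - 1)) = {\<lambda>_. 0}" if "a 0 = 0"
    using that fundamental_eq_empty[of 0 m "a(0 := a 0 - 1)" q lam n "k - 1"]
    by (simp add: P_def cspan_eq_span fun_cmodule.span_empty zero_fun_def)
  moreover have "Dstar n k ` P q m lam n (k - 1) (a(0 := a 0 - 1)) \<subseteq> P q m lam n k a"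
    unfolding P_def cspan_eq_span using Dstar_fundamental[OF assms(1,2) k]
    by (intro span_image_subset[OF module_hom_Dstar]) (auto simp: P_def cspan_eq_span)
  ultimately show ?thesis by blast
qed

end
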